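(* Let $H$ be an infinite-dimensional Hilbert $*$-space with hermitian basis $F$, and fix distinct $u,e\in F$. Let $T\in\mathcal B(H)$ be the unitary with $Tu=e$, $Te=u$ and $Tf=f$ for $f\in F\setminus\{u,e\}$. Then $T(\mathfrak c_u)=\mathfrak c_e$, $T^{(n)}(\min\mathfrak c_u\cap M_n(H))=\min\mathfrak c_e\cap M_n(H)$ and $T^{(n)}(\max\mathfrak c_u\cap M_n(H))=\max\mathfrak c_e\cap M_n(H)$ for all $n$; in particular $T:(H,\max\mathfrak c_u)\to(H,\max\mathfrak c_e)$ is a unital matrix positive map. Nevertheless $T$ is not separable: there is no sequence of linear functionals $q_l$ on $H$ that are nonnegative on $\mathfrak c_u$ and vectors $p_l\in\mathfrak c_e$ with $T\zeta=\lim_k\sum_{l=1}^k q_l(\zeta)p_l$ for all $\zeta\in H$.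
   Context: A Hilbert $*$-space is a complex Hilbert space (inner product linear in the first variable) with a conjugate-linear $\zeta\mapsto\zeta^*$, $\zeta^{**}=\zeta$, $(\zeta^*,\eta^* )=\overline{(\zeta,\eta)}$; a hermitian basis is an orthonormal basis of hermitian vectors. For a hermitian unit vector $w$, the unital cone is $\mathfrak c_w=\{\zeta\in H_h:\|\zeta\|\le\sqrt2(\zeta,w)\}$. Matrices over $H$ or the conjugate space $\overline H$ carry the involution $[x_{ij}]^*=[x_{ji}^*]$; $T^{(n)}[\zeta_{ij}]=[T\zeta_{ij}]$. A state of $\mathfrak c_w$ is a linear functional $\sigma$ with $\sigma(w)=1$, $\sigma(\mathfrak c_w)\ge0$; $\min\mathfrak c_w\cap M_n(H)=\{\zeta\in M_n(H)_h:[\sigma(\zeta_{ij})]\ge0\ \forall$ states $\sigma\}$. With $\mathfrak c_w^\boxdot=\{\bar\eta\in M_n(\overline H)_h:[(\xi,\eta_{st})]\ge0\ \forall\xi\in\mathfrak c_w\}$, $\max\mathfrak c_w\cap M_n(H)=\{\zeta\in M_n(H)_h:[(\zeta_{ik},\eta_{jl})]_{(i,j),(k,l)}\ge0\ \forall\bar\eta\in\mathfrak c_w^\boxdot\}$. *)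

theory Defs
  imports "HOL-Analysis.Analysis" "HOL-Library.Complex_Order"
begin

text \<open>A complex Hilbert space with conjugate-linear involution (Hilbert *-space), given by
  an abelian group type 'a with explicit complex scalar multiplication sm, inner product ip
  (linear in the first variable) and involution st.\<close>

definition hnorm :: "('a \<Rightarrow> 'a \<Rightarrow> complex) \<Rightarrow> 'a \<Rightarrow> real" where
  "hnorm ip x = sqrt (Re (ip x x))"

definition hilbert_star_space ::
  "(complex \<Rightarrow> 'a::ab_group_add \<Rightarrow> 'a) \<Rightarrow> ('a \<Rightarrow> 'a \<Rightarrow> complex) \<Rightarrow> ('a \<Rightarrow> 'a) \<Rightarrow> bool" where
  "hilbert_star_space sm ip st \<longleftrightarrow>
     (\<forall>a x y. sm a (x + y) = sm a x + sm a y) \<and>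
     (\<forall>a b x. sm (a + b) x = sm a x + sm b x) \<and>
     (\<forall>a b x. sm a (sm b x) = sm (a * b) x) \<and>
     (\<forall>x. sm 1 x = x) \<and>
     (\<forall>x y z. ip (x + y) z = ip x z + ip y z) \<and>
     (\<forall>a x y. ip (sm a x) y = a * ip x y) \<and>
     (\<forall>x y. ip y x = cnj (ip x y)) \<and>
     (\<forall>x. 0 \<le> ip x x) \<and>
     (\<forall>x. ip x x = 0 \<longrightarrow> x = 0) \<and>
     (\<forall>s :: nat \<Rightarrow> 'a. (\<forall>\<epsilon>>0. \<exists>N. \<forall>m\<ge>N. \<forall>k\<ge>N. hnorm ip (s m - s k) < \<epsilon>)
         \<longrightarrow> (\<exists>x. (\<lambda>k. hnorm ip (s k - x)) \<longlonglongrightarrow> 0)) \<and>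
     (\<forall>x y. st (x + y) = st x + st y) \<and>
     (\<forall>a x. st (sm a x) = sm (cnj a) (st x)) \<and>
     (\<forall>x. st (st x) = x) \<and>
     (\<forall>x y. ip (st x) (st y) = cnj (ip x y))"

definition hermitian_basis ::
  "('a::ab_group_add \<Rightarrow> 'a \<Rightarrow> complex) \<Rightarrow> ('a \<Rightarrow> 'a) \<Rightarrow> 'a set \<Rightarrow> bool" where
  "hermitian_basis ip st F \<longleftrightarrow>
     (\<forall>f\<in>F. st f = f) \<and> (\<forall>f\<in>F. ip f f = 1) \<and>
     (\<forall>f\<in>F. \<forall>g\<in>F. f \<noteq> g \<longrightarrow> ip f g = 0) \<and>
     (\<forall>x. (\<forall>f\<in>F. ip x f = 0) \<longrightarrow> x = 0)"

definition clin_map :: "(complex \<Rightarrow> 'a::ab_group_add \<Rightarrow> 'a) \<Rightarrow> ('a \<Rightarrow> 'a) \<Rightarrow> bool" where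
  "clin_map sm T \<longleftrightarrow> (\<forall>x y. T (x + y) = T x + T y) \<and> (\<forall>a x. T (sm a x) = sm a (T x))"

definition clin_fun :: "(complex \<Rightarrow> 'a::ab_group_add \<Rightarrow> 'a) \<Rightarrow> ('a \<Rightarrow> complex) \<Rightarrow> bool" where
  "clin_fun sm f \<longleftrightarrow> (\<forall>x y. f (x + y) = f x + f y) \<and> (\<forall>a x. f (sm a x) = a * f x)"

definition unitary_op ::
  "(complex \<Rightarrow> 'a::ab_group_add \<Rightarrow> 'a) \<Rightarrow> ('a \<Rightarrow> 'a \<Rightarrow> complex) \<Rightarrow> ('a \<Rightarrow> 'a) \<Rightarrow> bool" where
  "unitary_op sm ip T \<longleftrightarrow> clin_map sm T \<and> (\<exists>C. \<forall>x. hnorm ip (T x) \<le> C * hnorm ip x) \<and>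
     (\<forall>x y. ip (T x) (T y) = ip x y) \<and> surj T"

text \<open>Unital cone c_w = {zeta in H_h : norm zeta <= sqrt 2 (zeta, w)}
  ((zeta,w) is real for hermitian zeta, w).\<close>
definition unital_cone ::
  "('a \<Rightarrow> 'a \<Rightarrow> complex) \<Rightarrow> ('a \<Rightarrow> 'a) \<Rightarrow> 'a \<Rightarrow> 'a set" where
  "unital_cone ip st w = {\<zeta>. st \<zeta> = \<zeta> \<and> hnorm ip \<zeta> \<le> sqrt 2 * Re (ip \<zeta> w)}"

definition is_state ::
  "(complex \<Rightarrow> 'a::ab_group_add \<Rightarrow> 'a) \<Rightarrow> ('a \<Rightarrow> 'a \<Rightarrow> complex) \<Rightarrow> ('a \<Rightarrow> 'a) \<Rightarrow> 'a \<Rightarrow> ('a \<Rightarrow> complex) \<Rightarrow> bool" where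
  "is_state sm ip st w \<sigma> \<longleftrightarrow> clin_fun sm \<sigma> \<and> \<sigma> w = 1 \<and> (\<forall>\<xi>\<in>unital_cone ip st w. 0 \<le> \<sigma> \<xi>)"

definition psd :: "('i::finite \<Rightarrow> 'i \<Rightarrow> complex) \<Rightarrow> bool" where
  "psd A \<longleftrightarrow> (\<forall>c :: 'i \<Rightarrow> complex. 0 \<le> (\<Sum>i\<in>UNIV. \<Sum>j\<in>UNIV. cnj (c i) * A i j * c j))"

text \<open>Hermitian matrices: [x_ij]^* = [x_ji^*] equals [x_ij]. (For matrices over the conjugate
  space, representing eta-bar by eta, the condition reads the same.)\<close>
definition mat_herm :: "('a \<Rightarrow> 'a) \<Rightarrow> ('n \<Rightarrow> 'n \<Rightarrow> 'a) \<Rightarrow> bool" where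
  "mat_herm st Z \<longleftrightarrow> (\<forall>i j. st (Z j i) = Z i j)"

definition min_cone ::
  "(complex \<Rightarrow> 'a::ab_group_add \<Rightarrow> 'a) \<Rightarrow> ('a \<Rightarrow> 'a \<Rightarrow> complex) \<Rightarrow> ('a \<Rightarrow> 'a) \<Rightarrow> 'a
    \<Rightarrow> ('n::finite \<Rightarrow> 'n \<Rightarrow> 'a) set" where
  "min_cone sm ip st w = {Z. mat_herm st Z \<and>
     (\<forall>\<sigma>. is_state sm ip st w \<sigma> \<longrightarrow> psd (\<lambda>i j. \<sigma> (Z i j)))}"

text \<open>c_w^boxdot at level n: a matrix eta-bar over the conjugate space is represented by the
  matrix eta over H.\<close>
definition boxdot_cone ::
  "('a \<Rightarrow> 'a \<Rightarrow> complex) \<Rightarrow> ('a \<Rightarrow> 'a) \<Rightarrow> 'a \<Rightarrow> ('n::finite \<Rightarrow> 'n \<Rightarrow> 'a) set" where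
  "boxdot_cone ip st w = {\<eta>. mat_herm st \<eta> \<and>
     (\<forall>\<xi>\<in>unital_cone ip st w. psd (\<lambda>s t. ip \<xi> (\<eta> s t)))}"

definition max_cone ::
  "('a \<Rightarrow> 'a \<Rightarrow> complex) \<Rightarrow> ('a \<Rightarrow> 'a) \<Rightarrow> 'a \<Rightarrow> ('n::finite \<Rightarrow> 'n \<Rightarrow> 'a) set" where
  "max_cone ip st w = {Z. mat_herm st Z \<and>
     (\<forall>\<eta> :: 'n \<Rightarrow> 'n \<Rightarrow> 'a. \<eta> \<in> boxdot_cone ip st w \<longrightarrow>
        psd (\<lambda>(i, j) (k, l). ip (Z i k) (\<eta> j l)))}"

definition ampl :: "('a \<Rightarrow> 'a) \<Rightarrow> ('n \<Rightarrow> 'n \<Rightarrow> 'a) \<Rightarrow> ('n \<Rightarrow> 'n \<Rightarrow> 'a)" where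
  "ampl T Z = (\<lambda>i j. T (Z i j))"

end

theory Submission
  imports Defs
begin

text \<open>The swap \<open>T\<close> is a unitary involution commuting with the involution of \<open>H\<close>, so it
  carries every cone built from the inner product, the involution and a base vector \<open>w\<close> at
  \<open>w = u\<close> onto the same cone at \<open>w = e\<close>.

  Non-separability: a separable expansion of \<open>T \<zeta>\<close> with \<open>\<zeta> \<in> \<frak>c\<^sub>u\<close> is a series of
  vectors of \<open>\<frak>c\<^sub>e\<close>, and every functional \<open>Re (\<cdot>, e) \<plusminus> Re (\<cdot>, g)\<close> with \<open>g \<bottom> e\<close> is
  nonnegative on \<open>\<frak>c\<^sub>e\<close>; if it kills \<open>T \<zeta>\<close>, it kills every term. Testing with
  \<open>\<zeta> = u \<plusminus> e\<close> and \<open>\<zeta> = u \<plusminus> f\<close> for a third basis vector \<open>f\<close> shows that every term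
  \<open>q\<^sub>l(u) p\<^sub>l\<close> with \<open>q\<^sub>l(u) \<noteq> 0\<close> has \<open>|Re (p\<^sub>l, u)| = |Re (p\<^sub>l, f)| = Re (p\<^sub>l, e)\<close>, which
  \<open>\<parallel>p\<^sub>l\<parallel> \<le> \<surd>2 Re (p\<^sub>l, e)\<close> only permits for \<open>p\<^sub>l = 0\<close>. So the expansion of \<open>T u = e\<close>
  would be identically zero.\<close>

lemma involution_image_eq:
  assumes "\<And>x. x \<in> A \<Longrightarrow> g x \<in> B" "\<And>y. y \<in> B \<Longrightarrow> g y \<in> A" "\<And>y. g (g y) = y"
  shows "g ` A = B"
  using assms by (metis image_iff subsetI subset_antisym image_subsetI)

lemma nonneg_term_eq_0_if_partial_sums_tendsto_0:
  fixes t :: "nat \<Rightarrow> real"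
  assumes nonneg: "\<And>l. 0 \<le> t l" and lim: "(\<lambda>k. \<Sum>l=1..k. t l) \<longlonglongrightarrow> 0" and l: "1 \<le> l"
  shows "t l = 0"
proof -
  have "t l \<le> 0"
  proof (rule LIMSEQ_le_const[OF lim], intro exI allI impI)
    fix k assume "l \<le> k"
    then show "t l \<le> (\<Sum>l=1..k. t l)" using l nonneg by (intro member_le_sum) auto
  qed
  then show ?thesis using nonneg[of l] by simp
qed

locale hilbert_star =
  fixes sm :: "complex \<Rightarrow> 'a::ab_group_add \<Rightarrow> 'a"
    and ip :: "'a \<Rightarrow> 'a \<Rightarrow> complex"
    and st :: "'a \<Rightarrow> 'a"
  assumes hilbert_star_space: "hilbert_star_space sm ip st"
begin

lemmas hilbert_star_space_unfolded = hilbert_star_space[unfolded hilbert_star_space_def]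

lemma sm_add_right: "sm a (x + y) = sm a x + sm a y"
  using hilbert_star_space_unfolded by meson

lemma sm_add_left: "sm (a + b) x = sm a x + sm b x"
  using hilbert_star_space_unfolded by meson

lemma ip_add_left: "ip (x + y) z = ip x z + ip y z"
  using hilbert_star_space_unfolded by meson

lemma ip_scale_left: "ip (sm a x) y = a * ip x y"
  using hilbert_star_space_unfolded by meson

lemma ip_commute: "ip y x = cnj (ip x y)"
  using hilbert_star_space_unfolded by meson

lemma ip_self_nonneg: "0 \<le> ip x x"
  using hilbert_star_space_unfolded by meson

lemma ip_self_eq_0: "ip x x = 0 \<Longrightarrow> x = 0"
  using hilbert_star_space_unfolded by meson

lemma st_add: "st (x + y) = st x + st y"
  using hilbert_star_space_unfolded by meson

lemma ip_st: "ip (st x) (st y) = cnj (ip x y)"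
  using hilbert_star_space_unfolded by meson

lemma ip_add_right: "ip z (x + y) = ip z x + ip z y"
  by (metis ip_commute ip_add_left complex_cnj_add)

lemma ip_scale_right: "ip x (sm a y) = cnj a * ip x y"
  by (metis ip_commute ip_scale_left complex_cnj_mult)

lemma ip_zero_left: "ip 0 y = 0"
  using ip_add_left[of 0 0 y] by simp

lemma ip_diff_left: "ip (x - z) y = ip x y - ip z y"
  using ip_add_left[of "x - z" z y] by simp

lemma ip_diff_right: "ip y (x - z) = ip y x - ip y z"
  using ip_add_right[of y "x - z" z] by simp

lemma sm_zero_left: "sm 0 x = 0"
  using sm_add_left[of 0 0 x] by simp

lemma sm_zero_right: "sm a 0 = 0"
  using sm_add_right[of a 0 0] by simp

lemma st_diff: "st (x - y) = st x - st y"
  using st_add[of "x - y" y] by (simp add: eq_diff_eq)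

lemma ip_sum_left: "ip (\<Sum>l\<in>A. x l) y = (\<Sum>l\<in>A. ip (x l) y)"
  by (induction A rule: infinite_finite_induct) (auto simp: ip_zero_left ip_add_left)

lemma ip_self_real: "ip x x = of_real (Re (ip x x))" and Re_ip_self_nonneg: "0 \<le> Re (ip x x)"
  using ip_self_nonneg[of x] unfolding less_eq_complex_def by (auto simp: complex_eq_iff)

lemma hnorm_power2: "(hnorm ip x)\<^sup>2 = Re (ip x x)"
  unfolding hnorm_def using Re_ip_self_nonneg by simp

lemma hnorm_nonneg: "0 \<le> hnorm ip x"
  unfolding hnorm_def using Re_ip_self_nonneg by simp

definition orthonormal :: "'a set \<Rightarrow> bool" where
  "orthonormal B \<longleftrightarrow> (\<forall>b\<in>B. ip b b = 1) \<and> (\<forall>b\<in>B. \<forall>c\<in>B. b \<noteq> c \<longrightarrow> ip b c = 0)"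

lemma orthonormal_unit: "orthonormal B \<Longrightarrow> b \<in> B \<Longrightarrow> ip b b = 1"
  by (simp add: orthonormal_def)

lemma orthonormal_orth: "orthonormal B \<Longrightarrow> b \<in> B \<Longrightarrow> c \<in> B \<Longrightarrow> b \<noteq> c \<Longrightarrow> ip b c = 0"
  by (simp add: orthonormal_def)

lemma orthonormal_subset: "orthonormal B \<Longrightarrow> C \<subseteq> B \<Longrightarrow> orthonormal C"
  unfolding orthonormal_def by (meson subsetD)

lemma Re_ip_self_remove_component:
  assumes "ip v v = 1"
  shows "Re (ip x x) = Re (ip (x - sm (ip x v) v) (x - sm (ip x v) v)) + (cmod (ip x v))\<^sup>2"
proof -
  define a where "a = ip x v"
  have "ip v x = cnj a" using ip_commute a_def by metis
  then have "ip (x - sm a v) (x - sm a v) = ip x x - a * cnj a"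
    using assms by (simp add: ip_diff_left ip_diff_right ip_scale_left ip_scale_right
        a_def[symmetric] algebra_simps)
  then show ?thesis unfolding a_def[symmetric] by (simp add: complex_mult_cnj cmod_power2)
qed

lemma bessel_inequality:
  assumes "finite B" "orthonormal B"
  shows "(\<Sum>b\<in>B. (cmod (ip x b))\<^sup>2) \<le> Re (ip x x)"
  using assms
proof (induction B arbitrary: x rule: finite_induct)
  case empty
  then show ?case using Re_ip_self_nonneg by simp
next
  case (insert b B)
  define y where "y = x - sm (ip x b) b"
  have "ip y c = ip x c" if "c \<in> B" for c
    using insert that unfolding y_def orthonormal_def by (auto simp: ip_diff_left ip_scale_left)
  moreover have "orthonormal B" using insert.prems by (rule orthonormal_subset) blast
  ultimately have "(\<Sum>c\<in>B. (cmod (ip x c))\<^sup>2) \<le> Re (ip y y)"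
    using insert.IH[of y] by simp
  moreover have "ip b b = 1" using orthonormal_unit[OF insert.prems] by simp
  ultimately show ?case
    using Re_ip_self_remove_component[of b x] insert.hyps by (simp add: y_def)
qed

lemma bessel_inequality_Re:
  assumes "finite B" "orthonormal B"
  shows "(\<Sum>b\<in>B. (Re (ip x b))\<^sup>2) \<le> Re (ip x x)"
proof -
  have "(Re (ip x b))\<^sup>2 \<le> (cmod (ip x b))\<^sup>2" for b
    by (metis abs_Re_le_cmod abs_ge_zero power2_abs power_mono)
  then have "(\<Sum>b\<in>B. (Re (ip x b))\<^sup>2) \<le> (\<Sum>b\<in>B. (cmod (ip x b))\<^sup>2)"
    by (rule sum_mono)
  also have "\<dots> \<le> Re (ip x x)" using bessel_inequality[OF assms] .
  finally show ?thesis .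
qed

lemma abs_Re_ip_le_hnorm:
  assumes "ip v v = 1"
  shows "\<bar>Re (ip x v)\<bar> \<le> hnorm ip x"
  using bessel_inequality_Re[of "{v}" x] assms unfolding hnorm_def orthonormal_def
  by (simp add: real_le_rsqrt)

lemma unital_cone_Re_ip_bounds:
  assumes "y \<in> unital_cone ip st w"
  shows "0 \<le> Re (ip y w)" and "Re (ip y y) \<le> 2 * (Re (ip y w))\<^sup>2"
proof -
  have le: "hnorm ip y \<le> sqrt 2 * Re (ip y w)" using assms unfolding unital_cone_def by auto
  then show "0 \<le> Re (ip y w)" using hnorm_nonneg[of y] by (smt (verit) real_sqrt_gt_zero mult_pos_neg)
  have "(hnorm ip y)\<^sup>2 \<le> (sqrt 2 * Re (ip y w))\<^sup>2"
    using le hnorm_nonneg[of y] by (simp add: power_mono)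
  then show "Re (ip y y) \<le> 2 * (Re (ip y w))\<^sup>2" by (simp add: hnorm_power2 power_mult_distrib)
qed

lemma unital_cone_abs_Re_ip_le:
  assumes y: "y \<in> unital_cone ip st w" and "orthonormal {w, g}" "w \<noteq> g"
  shows "\<bar>Re (ip y g)\<bar> \<le> Re (ip y w)"
proof -
  have "(Re (ip y w))\<^sup>2 + (Re (ip y g))\<^sup>2 \<le> Re (ip y y)"
    using bessel_inequality_Re[of "{w, g}" y] assms by simp
  then have "(Re (ip y g))\<^sup>2 \<le> (Re (ip y w))\<^sup>2" using unital_cone_Re_ip_bounds(2)[OF y] by simp
  then show ?thesis using unital_cone_Re_ip_bounds(1)[OF y] by (metis abs_le_square_iff abs_of_nonneg)
qed

lemma unital_cone_eq_0:
  assumes y: "y \<in> unital_cone ip st w" and "orthonormal {w, g, h}" "w \<noteq> g" "w \<noteq> h" "g \<noteq> h"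
    and "(Re (ip y g))\<^sup>2 = (Re (ip y w))\<^sup>2" "(Re (ip y h))\<^sup>2 = (Re (ip y w))\<^sup>2"
  shows "y = 0"
proof -
  have "(Re (ip y w))\<^sup>2 + (Re (ip y g))\<^sup>2 + (Re (ip y h))\<^sup>2 \<le> Re (ip y y)"
    using bessel_inequality_Re[of "{w, g, h}" y] assms by (simp add: add.assoc)
  then have "Re (ip y y) \<le> 0" using assms unital_cone_Re_ip_bounds(2)[OF y]
    by (smt (verit) zero_le_power2)
  then have "ip y y = 0" using Re_ip_self_nonneg ip_self_real by (metis antisym of_real_0)
  then show ?thesis by (rule ip_self_eq_0)
qed

lemma add_diff_mem_unital_cone:
  assumes "orthonormal {w, g}" "w \<noteq> g" "st w = w" "st g = g"
  shows "w + g \<in> unital_cone ip st w" and "w - g \<in> unital_cone ip st w"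
proof -
  have "ip w w = 1" "ip g g = 1" "ip w g = 0" "ip g w = 0"
    using orthonormal_unit[OF assms(1)] orthonormal_orth[OF assms(1)] assms(2) by auto
  then show "w + g \<in> unital_cone ip st w" "w - g \<in> unital_cone ip st w"
    using assms(3,4) unfolding unital_cone_def hnorm_def
    by (simp_all add: ip_add_left ip_add_right ip_diff_left ip_diff_right st_add st_diff)
qed

text \<open>The functional \<open>\<psi> = Re (\<cdot>, w) + s Re (\<cdot>, g)\<close> is real-linear, bounded and nonnegative
  on the cone, so applied to the partial sums it yields a series of nonnegative terms
  converging to \<open>\<psi> x = 0\<close>.\<close>
lemma cone_series_term_eq_0:
  assumes on: "orthonormal {w, g}" "w \<noteq> g" and s: "\<bar>s\<bar> \<le> 1"
    and c: "\<And>l. 0 \<le> c l" and p: "\<And>l. p l \<in> unital_cone ip st w"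
    and lim: "(\<lambda>k. hnorm ip (x - (\<Sum>l=1..k. sm (c l) (p l)))) \<longlonglongrightarrow> 0"
    and x: "Re (ip x w) + s * Re (ip x g) = 0" and l: "1 \<le> l"
  shows "c l = 0 \<or> Re (ip (p l) w) + s * Re (ip (p l) g) = 0"
proof -
  define \<psi> where "\<psi> y = Re (ip y w) + s * Re (ip y g)" for y
  define t where "t j = Re (c j) * \<psi> (p j)" for j
  have Im_c: "Im (c j) = 0" and Re_c: "0 \<le> Re (c j)" for j
    using c[of j] unfolding less_eq_complex_def by auto
  have unit: "ip w w = 1" "ip g g = 1" using orthonormal_unit[OF on(1)] by auto
  have scale: "\<bar>s * a\<bar> \<le> \<bar>a\<bar>" for a
    using s by (simp add: abs_mult mult_left_le_one_le)
  have t_nonneg: "0 \<le> t j" for j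
  proof -
    have "\<bar>s * Re (ip (p j) g)\<bar> \<le> Re (ip (p j) w)"
      using scale unital_cone_abs_Re_ip_le[OF p on] by (rule order_trans)
    then show ?thesis unfolding t_def \<psi>_def using Re_c by simp
  qed
  have \<psi>_diff: "\<psi> (y - z) = \<psi> y - \<psi> z" for y z
    unfolding \<psi>_def by (simp add: ip_diff_left algebra_simps)
  have \<psi>_sum: "\<psi> (\<Sum>l=1..k. sm (c l) (p l)) = (\<Sum>l=1..k. t l)" for k
    unfolding \<psi>_def t_def
    by (simp add: ip_sum_left ip_scale_left Im_c sum.distrib sum_distrib_left algebra_simps)
  have \<psi>_bound: "\<bar>\<psi> y\<bar> \<le> 2 * hnorm ip y" for y
    using abs_Re_ip_le_hnorm[OF unit(1), of y] abs_Re_ip_le_hnorm[OF unit(2), of y]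
      scale[of "Re (ip y g)"] abs_triangle_ineq[of "Re (ip y w)" "s * Re (ip y g)"]
    unfolding \<psi>_def by linarith
  have \<psi>_x: "\<psi> x = 0" using x unfolding \<psi>_def .
  have "(\<lambda>k. - (\<Sum>l=1..k. t l)) \<longlonglongrightarrow> 0"
  proof (rule Lim_null_comparison)
    have "norm (- (\<Sum>l=1..k. t l)) = \<bar>\<psi> (x - (\<Sum>l=1..k. sm (c l) (p l)))\<bar>" for k
      unfolding \<psi>_diff \<psi>_sum \<psi>_x by simp
    then show "\<forall>\<^sub>F k in sequentially. norm (- (\<Sum>l=1..k. t l))
        \<le> 2 * hnorm ip (x - (\<Sum>l=1..k. sm (c l) (p l)))"
      using \<psi>_bound by (intro always_eventually) simp
    show "(\<lambda>k. 2 * hnorm ip (x - (\<Sum>l=1..k. sm (c l) (p l)))) \<longlonglongrightarrow> 0"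
      using tendsto_mult_right_zero[OF lim] .
  qed
  then have "t l = 0"
    using nonneg_term_eq_0_if_partial_sums_tendsto_0[OF t_nonneg _ l]
      tendsto_minus_cancel_left[of "\<lambda>k. \<Sum>l=1..k. t l" 0 sequentially]
    by simp
  then show ?thesis using Im_c[of l] unfolding t_def \<psi>_def by (auto simp: complex_eq_iff)
qed

end

locale unitary_operator = hilbert_star +
  fixes T :: "'a \<Rightarrow> 'a"
  assumes unitary: "unitary_op sm ip T"
begin

lemma T_add: "T (x + y) = T x + T y"
  using unitary unfolding unitary_op_def clin_map_def by meson

lemma T_scale: "T (sm a x) = sm a (T x)"
  using unitary unfolding unitary_op_def clin_map_def by meson

lemma ip_T_T: "ip (T x) (T y) = ip x y"
  using unitary unfolding unitary_op_def by meson

lemma T_diff: "T (x - y) = T x - T y"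
  by (metis T_add add_diff_cancel diff_add_cancel)

end

locale star_unitary_involution = unitary_operator +
  assumes involutive: "T (T x) = x"
    and star_commute: "st (T x) = T (st x)"
begin

lemma ip_T_left: "ip (T x) y = ip x (T y)"
  by (metis involutive ip_T_T)

lemma unital_cone_T_mem:
  assumes "T w = w'" "x \<in> unital_cone ip st w"
  shows "T x \<in> unital_cone ip st w'"
  using assms unfolding unital_cone_def hnorm_def by (auto simp: star_commute ip_T_T)

lemma mat_herm_ampl: "mat_herm st Z \<Longrightarrow> mat_herm st (ampl T Z)"
  unfolding mat_herm_def ampl_def by (simp add: star_commute)

lemma min_cone_ampl_mem:
  assumes "T w = w'" "Z \<in> min_cone sm ip st w"
  shows "ampl T Z \<in> min_cone sm ip st w'"
  unfolding min_cone_def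
proof (intro CollectI conjI allI impI)
  show "mat_herm st (ampl T Z)" using assms(2) mat_herm_ampl unfolding min_cone_def by blast
  fix \<sigma> assume "is_state sm ip st w' \<sigma>"
  then have "is_state sm ip st w (\<sigma> \<circ> T)"
    using assms(1) unital_cone_T_mem[OF assms(1)] unfolding is_state_def clin_fun_def
    by (auto simp: T_add T_scale)
  then show "psd (\<lambda>i j. \<sigma> (ampl T Z i j))"
    using assms(2) unfolding min_cone_def ampl_def by auto
qed

lemma max_cone_ampl_mem:
  fixes Z :: "'n::finite \<Rightarrow> 'n \<Rightarrow> 'a"
  assumes "T w = w'" "Z \<in> max_cone ip st w"
  shows "ampl T Z \<in> max_cone ip st w'"
  unfolding max_cone_def
proof (intro CollectI conjI allI impI)
  show "mat_herm st (ampl T Z)" using assms(2) mat_herm_ampl unfolding max_cone_def by blast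
  fix \<eta> :: "'n \<Rightarrow> 'n \<Rightarrow> 'a" assume "\<eta> \<in> boxdot_cone ip st w'"
  then have "ampl T \<eta> \<in> boxdot_cone ip st w"
    using unital_cone_T_mem[OF assms(1)] mat_herm_ampl unfolding boxdot_cone_def ampl_def
    by (auto simp: ip_T_left[symmetric])
  then show "psd (\<lambda>(i, j) (k, l). ip (ampl T Z i k) (\<eta> j l))"
    using assms(2) unfolding max_cone_def ampl_def by (auto simp: ip_T_left)
qed

lemma ampl_involutive: "ampl T (ampl T Z) = Z"
  unfolding ampl_def by (simp add: involutive)

context
  fixes w w' assumes T_w: "T w = w'"
begin

lemma T_w': "T w' = w"
  using T_w involutive by blast

lemma image_unital_cone: "T ` unital_cone ip st w = unital_cone ip st w'"
  by (rule involution_image_eq) (auto intro: unital_cone_T_mem T_w T_w' involutive)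

lemma image_min_cone: "ampl T ` min_cone sm ip st w = min_cone sm ip st w'"
  by (rule involution_image_eq) (auto intro: min_cone_ampl_mem T_w T_w' ampl_involutive)

lemma image_max_cone: "ampl T ` max_cone ip st w = max_cone ip st w'"
  by (rule involution_image_eq) (auto intro: max_cone_ampl_mem T_w T_w' ampl_involutive)

end

end

definition separable_map ::
  "(complex \<Rightarrow> 'a::ab_group_add \<Rightarrow> 'a) \<Rightarrow> ('a \<Rightarrow> 'a \<Rightarrow> complex) \<Rightarrow> ('a \<Rightarrow> 'a) \<Rightarrow> 'a \<Rightarrow> 'a
    \<Rightarrow> ('a \<Rightarrow> 'a) \<Rightarrow> bool" where
  "separable_map sm ip st u e T \<longleftrightarrow>
     (\<exists>(q :: nat \<Rightarrow> 'a \<Rightarrow> complex) (p :: nat \<Rightarrow> 'a).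
        (\<forall>l. clin_fun sm (q l) \<and> (\<forall>\<xi>\<in>unital_cone ip st u. 0 \<le> q l \<xi>)
             \<and> p l \<in> unital_cone ip st e)
        \<and> (\<forall>\<zeta>. (\<lambda>k. hnorm ip (T \<zeta> - (\<Sum>l=1..k. sm (q l \<zeta>) (p l)))) \<longlonglongrightarrow> 0))"

locale basis_swap = unitary_operator +
  fixes F :: "'a set" and u e :: 'a
  assumes basis: "hermitian_basis ip st F"
    and u_in_F: "u \<in> F" and e_in_F: "e \<in> F" and u_ne_e: "u \<noteq> e"
    and T_u: "T u = e" and T_e: "T e = u"
    and T_fix: "\<forall>f\<in>F - {u, e}. T f = f"
begin

lemma basis_hermitian: "f \<in> F \<Longrightarrow> st f = f"
  using basis unfolding hermitian_basis_def by meson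

lemma basis_orthonormal: "orthonormal F"
  using basis unfolding hermitian_basis_def orthonormal_def by meson

lemma basis_ext:
  assumes "\<And>f. f \<in> F \<Longrightarrow> ip x f = ip y f"
  shows "x = y"
proof -
  have "\<forall>f\<in>F. ip (x - y) f = 0" using assms by (simp add: ip_diff_left)
  then have "x - y = 0" using basis unfolding hermitian_basis_def by meson
  then show ?thesis by simp
qed

lemma T_basis: "f \<in> F \<Longrightarrow> T f \<in> F" and T_T_basis: "f \<in> F \<Longrightarrow> T (T f) = f"
  using T_u T_e T_fix u_in_F e_in_F by (cases "f = u"; cases "f = e"; auto)+

lemma T_involutive: "T (T x) = x"
  by (rule basis_ext) (metis T_T_basis ip_T_T)

lemma T_star_commute: "st (T x) = T (st x)"
proof (rule basis_ext)
  fix f assume f: "f \<in> F"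
  have "ip (st (T x)) f = cnj (ip x (T f))"
    using f by (metis basis_hermitian T_involutive ip_T_T ip_st)
  also have "\<dots> = ip (T (st x)) f"
    using f T_basis by (metis basis_hermitian T_involutive ip_T_T ip_st)
  finally show "ip (st (T x)) f = ip (T (st x)) f" .
qed

sublocale star_unitary_involution
  by unfold_locales (rule T_involutive, rule T_star_commute)

context
  fixes q :: "nat \<Rightarrow> 'a \<Rightarrow> complex" and p :: "nat \<Rightarrow> 'a"
  assumes q_linear: "\<And>l. clin_fun sm (q l)"
    and q_nonneg: "\<And>l \<xi>. \<xi> \<in> unital_cone ip st u \<Longrightarrow> 0 \<le> q l \<xi>"
    and p_cone: "\<And>l. p l \<in> unital_cone ip st e"
    and approx: "\<And>\<zeta>. (\<lambda>k. hnorm ip (T \<zeta> - (\<Sum>l=1..k. sm (q l \<zeta>) (p l)))) \<longlonglongrightarrow> 0"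
begin

text \<open>Test the expansion on \<open>u \<plusminus> g\<close>, both in the cone of \<open>u\<close>: since
  \<open>q l u \<noteq> 0\<close>, one of them has a nonzero coefficient, and its image \<open>e \<plusminus> T g\<close> is
  annihilated by \<open>Re (\<cdot>, e) \<mp> Re (\<cdot>, T g)\<close>.\<close>
lemma separable_approx_weight_eq:
  assumes g: "g \<in> F" "g \<noteq> u" and l: "1 \<le> l" and q_u: "q l u \<noteq> 0"
  shows "(Re (ip (p l) (T g)))\<^sup>2 = (Re (ip (p l) e))\<^sup>2"
proof -
  have Tg: "T g \<in> F" "e \<noteq> T g"
    using g T_basis by (simp, metis T_e T_involutive)
  have on: "orthonormal {e, T g}"
    by (rule orthonormal_subset[OF basis_orthonormal]) (use Tg e_in_F in simp)
  have ip: "ip e e = 1" "ip (T g) (T g) = 1" "ip e (T g) = 0" "ip (T g) e = 0"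
    using orthonormal_unit[OF on] orthonormal_orth[OF on] Tg(2) by auto
  have "orthonormal {u, g}"
    by (rule orthonormal_subset[OF basis_orthonormal]) (use g u_in_F in simp)
  then have cone: "u + g \<in> unital_cone ip st u" "u - g \<in> unital_cone ip st u"
    using add_diff_mem_unital_cone g(2) basis_hermitian[OF u_in_F] basis_hermitian[OF g(1)]
    by auto
  have q_add: "q l (x + y) = q l x + q l y" for x y
    using q_linear[of l] unfolding clin_fun_def by simp
  have "(u + g) + (u - g) = u + u" by (simp add: algebra_simps)
  then have "q l (u + g) + q l (u - g) = 2 * q l u"
    by (metis q_add mult_2)
  then consider "q l (u + g) \<noteq> 0" | "q l (u - g) \<noteq> 0" using q_u by fastforce
  then show ?thesis
  proof cases
    case 1
    have "Re (ip (T (u + g)) e) + (-1) * Re (ip (T (u + g)) (T g)) = 0"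
      by (simp add: T_add T_u ip_add_left ip)
    from cone_series_term_eq_0[OF on Tg(2) _ q_nonneg[OF cone(1)] p_cone approx this l]
    have "Re (ip (p l) e) - Re (ip (p l) (T g)) = 0" using 1 by simp
    then show ?thesis by simp
  next
    case 2
    have "Re (ip (T (u - g)) e) + 1 * Re (ip (T (u - g)) (T g)) = 0"
      by (simp add: T_diff T_u ip_diff_left ip)
    from cone_series_term_eq_0[OF on Tg(2) _ q_nonneg[OF cone(2)] p_cone approx this l]
    have "Re (ip (p l) (T g)) = - Re (ip (p l) e)" using 2 by simp
    then show ?thesis by simp
  qed
qed

lemma separable_approx_term_eq_0:
  assumes f: "f \<in> F" "f \<noteq> u" "f \<noteq> e" and l: "1 \<le> l"
  shows "sm (q l u) (p l) = 0"
proof (cases "q l u = 0")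
  case True
  then show ?thesis by (simp add: sm_zero_left)
next
  case False
  have "(Re (ip (p l) u))\<^sup>2 = (Re (ip (p l) e))\<^sup>2"
    using separable_approx_weight_eq[OF e_in_F u_ne_e[symmetric] l False] T_e by simp
  moreover have "(Re (ip (p l) f))\<^sup>2 = (Re (ip (p l) e))\<^sup>2"
    using separable_approx_weight_eq[OF f(1,2) l False] T_fix f by simp
  moreover have "orthonormal {e, u, f}"
    by (rule orthonormal_subset[OF basis_orthonormal]) (use f(1) u_in_F e_in_F in simp)
  ultimately have "p l = 0"
    using unital_cone_eq_0[OF p_cone] u_ne_e f(2,3) by simp
  then show ?thesis by (simp add: sm_zero_right)
qed

end

lemma not_separable:
  assumes "infinite F"
  shows "\<not> separable_map sm ip st u e T"
proof
  assume "separable_map sm ip st u e T"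
  then obtain q p where q: "\<And>l. clin_fun sm (q l)" "\<And>l \<xi>. \<xi> \<in> unital_cone ip st u \<Longrightarrow> 0 \<le> q l \<xi>"
    and p: "\<And>l. p l \<in> unital_cone ip st e"
    and approx: "\<And>\<zeta>. (\<lambda>k. hnorm ip (T \<zeta> - (\<Sum>l=1..k. sm (q l \<zeta>) (p l)))) \<longlonglongrightarrow> 0"
    unfolding separable_map_def by blast
  have "\<not> F \<subseteq> {u, e}" using assms finite_subset by auto
  then obtain f where f: "f \<in> F" "f \<noteq> u" "f \<noteq> e" by auto
  have "(\<Sum>l=1..k. sm (q l u) (p l)) = 0" for k
    using separable_approx_term_eq_0[OF q p approx f] by (intro sum.neutral) auto
  moreover have "ip e e = 1" using orthonormal_unit[OF basis_orthonormal e_in_F] .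
  ultimately have "(\<lambda>k. hnorm ip (T u - (\<Sum>l=1..k. sm (q l u) (p l)))) = (\<lambda>k. 1)"
    by (simp add: T_u hnorm_def)
  then show False using approx[of u] LIMSEQ_const_iff[of "1::real" 0] by simp
qed

end

theorem mainTheorem16:
  fixes sm :: "complex \<Rightarrow> 'a::ab_group_add \<Rightarrow> 'a"
    and ip :: "'a \<Rightarrow> 'a \<Rightarrow> complex"
    and st :: "'a \<Rightarrow> 'a"
    and F :: "'a set" and u e :: 'a and T :: "'a \<Rightarrow> 'a"
  assumes H: "hilbert_star_space sm ip st"
    and F: "hermitian_basis ip st F"
    and inf: "infinite F"
    and u: "u \<in> F" and e: "e \<in> F" and ue: "u \<noteq> e"
    and T: "unitary_op sm ip T"
    and Tu: "T u = e" and Te: "T e = u"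
    and Tf: "\<forall>f\<in>F - {u, e}. T f = f"
  shows "T ` unital_cone ip st u = unital_cone ip st e
    \<and> ampl T ` (min_cone sm ip st u :: ('n::finite \<Rightarrow> 'n \<Rightarrow> 'a) set) = min_cone sm ip st e
    \<and> ampl T ` (max_cone ip st u :: ('n \<Rightarrow> 'n \<Rightarrow> 'a) set) = max_cone ip st e
    \<and> (T u = e \<and> ampl T ` (max_cone ip st u :: ('n \<Rightarrow> 'n \<Rightarrow> 'a) set) \<subseteq> max_cone ip st e)
    \<and> \<not> (\<exists>(q :: nat \<Rightarrow> 'a \<Rightarrow> complex) (p :: nat \<Rightarrow> 'a).
          (\<forall>l. clin_fun sm (q l) \<and> (\<forall>\<xi>\<in>unital_cone ip st u. 0 \<le> q l \<xi>)
               \<and> p l \<in> unital_cone ip st e)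
          \<and> (\<forall>\<zeta>. (\<lambda>k. hnorm ip (T \<zeta> - (\<Sum>l=1..k. sm (q l \<zeta>) (p l)))) \<longlonglongrightarrow> 0))"
proof -
  interpret basis_swap sm ip st T F u e
    by unfold_locales (fact H T F u e ue Tu Te Tf)+
  have "ampl T ` (min_cone sm ip st u :: ('n::finite \<Rightarrow> 'n \<Rightarrow> 'a) set) = min_cone sm ip st e"
    and "ampl T ` (max_cone ip st u :: ('n \<Rightarrow> 'n \<Rightarrow> 'a) set) = max_cone ip st e"
    using image_min_cone image_max_cone Tu by blast+
  then show ?thesis
    using image_unital_cone[OF Tu] not_separable[OF inf] Tu unfolding separable_map_def by simp
qed

end
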